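(* Let $\alpha,\beta,\gamma,\delta\in\mathbb{R}$ with $\alpha+\delta\neq 0$ and $\alpha\gamma=0$, and let $G_7$ be the connected, simply connected Lie group whose Lie algebra $\mathfrak{g}_7$ has a basis $\{e_1,e_2,e_3\}$ with $[e_1,e_2]=-\alpha e_1-\beta e_2-\beta e_3$, $[e_1,e_3]=\alpha e_1+\beta e_2+\beta e_3$, $[e_2,e_3]=\gamma e_1+\delta e_2+\delta e_3$, equipped with the left-invariant Lorentzian metric $g$ for which $\{e_1,e_2,e_3\}$ is pseudo-orthonormal with $e_3$ timelike, and with the product structure $J$. Let $\lambda_0,c\in\mathbb{R}$. Then there exists a derivation $D$ of $\mathfrak{g}_7$ with $\widetilde{\mathrm{Ric}}^0=(s^0\lambda_0+c)\mathrm{Id}+D$ (i.e. $(G_7,g,J)$ is an algebraic Schouten soliton associated to the canonical connection $\nabla^0$) if and only if one of the following holds: (i) $\alpha=\gamma=0$, $\delta\neq0$ and $c=0$; (ii) $\alpha\neq0$, $\beta=\gamma=0$, $\alpha+\delta\neq0$ and $c=-\frac12\alpha^2+2\alpha^2\lambda_0$.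
   Context: Pseudo-orthonormal means $g(e_1,e_1)=g(e_2,e_2)=1$, $g(e_3,e_3)=-1$, $g(e_i,e_j)=0$ for $i\neq j$; left-invariant tensors are identified with their values on $\mathfrak{g}$. $\nabla$ is the Levi-Civita connection of $g$. The product structure $J$ is the left-invariant endomorphism with $Je_1=e_1$, $Je_2=e_2$, $Je_3=-e_3$. The canonical connection is $\nabla^0_XY=\nabla_XY-\frac12(\nabla_XJ)JY$, and the Kobayashi–Nomizu connection is $\nabla^1_XY=\nabla^0_XY-\frac14[(\nabla_YJ)JX-(\nabla_{JY}J)X]$. For $k=0,1$: $R^k(X,Y)Z=\nabla^k_X\nabla^k_YZ-\nabla^k_Y\nabla^k_XZ-\nabla^k_{[X,Y]}Z$; $\rho^k(X,Y)=-g(R^k(X,e_1)Y,e_1)-g(R^k(X,e_2)Y,e_2)+g(R^k(X,e_3)Y,e_3)$; $\widetilde\rho^k(X,Y)=\frac12(\rho^k(X,Y)+\rho^k(Y,X))$; $\widetilde{\mathrm{Ric}}^k$ is defined by $\widetilde\rho^k(X,Y)=g(\widetilde{\mathrm{Ric}}^k(X),Y)$; and $s^k=\widetilde\rho^k(e_1,e_1)+\widetilde\rho^k(e_2,e_2)-\widetilde\rho^k(e_3,e_3)$. A derivation of $\mathfrak{g}$ is a linear map $D$ with $D[X,Y]=[DX,Y]+[X,DY]$. $(G,g,J)$ is an algebraic Schouten soliton associated to $\nabla^k$ (with real constants $\lambda_0,c$) if $\widetilde{\mathrm{Ric}}^k=(s^k\lambda_0+c)\mathrm{Id}+D$ for some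 derivation $D$. *)

theory Defs
  imports "HOL-Analysis.Analysis"
begin

text \<open>Index set of the basis {e1,e2,e3} of the 3-dimensional Lie algebra.
  Left-invariant vector fields are identified with vectors in real ^ idx.\<close>

datatype idx = E1 | E2 | E3

lemma UNIV_idx: "(UNIV :: idx set) = {E1, E2, E3}"
  using idx.exhaust by auto

instance idx :: finite
  by standard (simp add: UNIV_idx)

type_synonym vec3 = "real ^ idx"

definition e :: "idx \<Rightarrow> vec3" where
  "e i = axis i 1"

definition eps :: "idx \<Rightarrow> real" where
  "eps i = (case i of E1 \<Rightarrow> 1 | E2 \<Rightarrow> 1 | E3 \<Rightarrow> -1)"

definition gm :: "vec3 \<Rightarrow> vec3 \<Rightarrow> real" where
  "gm X Y = (\<Sum>k\<in>UNIV. eps k * (X $ k) * (Y $ k))"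

definition Jm :: "vec3 \<Rightarrow> vec3" where
  "Jm X = (\<chi> k. eps k * (X $ k))"

definition br7 :: "real \<Rightarrow> real \<Rightarrow> real \<Rightarrow> real \<Rightarrow> vec3 \<Rightarrow> vec3 \<Rightarrow> vec3" where
  "br7 a b c d X Y =
     (X$E1 * Y$E2 - X$E2 * Y$E1) *\<^sub>R ((-a) *\<^sub>R e E1 + (-b) *\<^sub>R e E2 + (-b) *\<^sub>R e E3)
   + (X$E1 * Y$E3 - X$E3 * Y$E1) *\<^sub>R (a *\<^sub>R e E1 + b *\<^sub>R e E2 + b *\<^sub>R e E3)
   + (X$E2 * Y$E3 - X$E3 * Y$E2) *\<^sub>R (c *\<^sub>R e E1 + d *\<^sub>R e E2 + d *\<^sub>R e E3)"

text \<open>Levi-Civita connection on left-invariant fields, via the Koszul formula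
  2 g(\<nabla>_X Y, Z) = g([X,Y],Z) - g([Y,Z],X) + g([Z,X],Y),
  expanded in the pseudo-orthonormal basis.\<close>
definition LC :: "(vec3 \<Rightarrow> vec3 \<Rightarrow> vec3) \<Rightarrow> vec3 \<Rightarrow> vec3 \<Rightarrow> vec3" where
  "LC br X Y = (\<Sum>k\<in>UNIV. (eps k * (1/2) *
       (gm (br X Y) (e k) - gm (br Y (e k)) X + gm (br (e k) X) Y)) *\<^sub>R e k)"

definition covJ :: "(vec3 \<Rightarrow> vec3 \<Rightarrow> vec3) \<Rightarrow> vec3 \<Rightarrow> vec3 \<Rightarrow> vec3" where
  "covJ br X Y = LC br X (Jm Y) - Jm (LC br X Y)"

definition nabla0 :: "(vec3 \<Rightarrow> vec3 \<Rightarrow> vec3) \<Rightarrow> vec3 \<Rightarrow> vec3 \<Rightarrow> vec3" where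
  "nabla0 br X Y = LC br X Y - (1/2) *\<^sub>R covJ br X (Jm Y)"

definition nabla1 :: "(vec3 \<Rightarrow> vec3 \<Rightarrow> vec3) \<Rightarrow> vec3 \<Rightarrow> vec3 \<Rightarrow> vec3" where
  "nabla1 br X Y = nabla0 br X Y
     - (1/4) *\<^sub>R (covJ br Y (Jm X) - covJ br (Jm Y) X)"

definition curv :: "(vec3 \<Rightarrow> vec3 \<Rightarrow> vec3) \<Rightarrow> (vec3 \<Rightarrow> vec3 \<Rightarrow> vec3)
                    \<Rightarrow> vec3 \<Rightarrow> vec3 \<Rightarrow> vec3 \<Rightarrow> vec3" where
  "curv nab br X Y Z = nab X (nab Y Z) - nab Y (nab X Z) - nab (br X Y) Z"

definition ricci_form :: "(vec3 \<Rightarrow> vec3 \<Rightarrow> vec3) \<Rightarrow> (vec3 \<Rightarrow> vec3 \<Rightarrow> vec3)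
                          \<Rightarrow> vec3 \<Rightarrow> vec3 \<Rightarrow> real" where
  "ricci_form nab br X Y = - (\<Sum>k\<in>UNIV. eps k * gm (curv nab br X (e k) Y) (e k))"

definition sym_ricci_form :: "(vec3 \<Rightarrow> vec3 \<Rightarrow> vec3) \<Rightarrow> (vec3 \<Rightarrow> vec3 \<Rightarrow> vec3)
                          \<Rightarrow> vec3 \<Rightarrow> vec3 \<Rightarrow> real" where
  "sym_ricci_form nab br X Y = (1/2) * (ricci_form nab br X Y + ricci_form nab br Y X)"

text \<open>Ricci operator: g(Ric X, Y) = symmetrized rho(X,Y).\<close>
definition ricci_op :: "(vec3 \<Rightarrow> vec3 \<Rightarrow> vec3) \<Rightarrow> (vec3 \<Rightarrow> vec3 \<Rightarrow> vec3)
                          \<Rightarrow> vec3 \<Rightarrow> vec3" where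
  "ricci_op nab br X = (\<Sum>k\<in>UNIV. (eps k * sym_ricci_form nab br X (e k)) *\<^sub>R e k)"

definition scal :: "(vec3 \<Rightarrow> vec3 \<Rightarrow> vec3) \<Rightarrow> (vec3 \<Rightarrow> vec3 \<Rightarrow> vec3) \<Rightarrow> real" where
  "scal nab br = (\<Sum>k\<in>UNIV. eps k * sym_ricci_form nab br (e k) (e k))"

definition is_derivation :: "(vec3 \<Rightarrow> vec3 \<Rightarrow> vec3) \<Rightarrow> (vec3 \<Rightarrow> vec3) \<Rightarrow> bool" where
  "is_derivation br D \<longleftrightarrow> linear D \<and> (\<forall>X Y. D (br X Y) = br (D X) Y + br X (D Y))"

definition algebraic_schouten_soliton ::
  "(vec3 \<Rightarrow> vec3 \<Rightarrow> vec3) \<Rightarrow> (vec3 \<Rightarrow> vec3 \<Rightarrow> vec3) \<Rightarrow> real \<Rightarrow> real \<Rightarrow> bool" where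
  "algebraic_schouten_soliton nab br lambda0 c \<longleftrightarrow>
     (\<exists>D. is_derivation br D \<and>
          (\<forall>X. ricci_op nab br X = (scal nab br * lambda0 + c) *\<^sub>R X + D X))"

end

theory Submission
  imports Defs
begin

text \<open>The canonical connection of \<open>\<g>\<^sub>7\<close> preserves both eigenspaces of \<open>J\<close> and turns out to be
  \<open>\<nabla>\<^sup>0\<^sub>X = \<omega>(X) R\<close> with \<open>R\<close> the rotation of the spacelike plane \<open>\<langle>e\<^sub>1, e\<^sub>2\<rangle>\<close> and \<open>\<omega>\<close> a
  linear form. Since these endomorphisms commute, its curvature is \<open>-\<omega>([X,Y]) R\<close>, which makes
  the Ricci operator an explicit matrix. The soliton equation determines \<open>D\<close> as
  \<open>Ric - (s \<lambda>\<^sub>0 + c) Id\<close>, so the question is which shifts \<open>Ric - m Id\<close> are derivations.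
  The Leibniz rule on pairs of basis vectors yields polynomial equations in
  \<open>\<alpha>, \<beta>, \<gamma>, \<delta>, m\<close>; together with \<open>\<alpha>\<gamma> = 0\<close> they leave exactly the cases
  \<open>\<alpha> = \<gamma> = m = 0\<close> and \<open>\<beta> = \<gamma> = 0, m = -\<alpha>\<^sup>2/2\<close>.\<close>

definition mk_vec3 :: "real \<Rightarrow> real \<Rightarrow> real \<Rightarrow> vec3" where
  "mk_vec3 x y z = (\<chi> k. case k of E1 \<Rightarrow> x | E2 \<Rightarrow> y | E3 \<Rightarrow> z)"

lemma mk_vec3_nth [simp]:
  "mk_vec3 x y z $ E1 = x" "mk_vec3 x y z $ E2 = y" "mk_vec3 x y z $ E3 = z"
  by (simp_all add: mk_vec3_def)

lemma vec3_eq_iff: "(X::vec3) = Y \<longleftrightarrow> X$E1 = Y$E1 \<and> X$E2 = Y$E2 \<and> X$E3 = Y$E3"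
  unfolding vec_eq_iff by (metis idx.exhaust)

lemma sum_UNIV_idx: "(\<Sum>k\<in>UNIV. f k) = f E1 + f E2 + f E3"
  by (simp add: UNIV_idx add.assoc)

lemma e_nth [simp]: "e i $ k = (if k = i then 1 else 0)"
  by (simp add: e_def axis_def)

lemma eps_simps [simp]: "eps E1 = 1" "eps E2 = 1" "eps E3 = -1"
  by (simp_all add: eps_def)

lemma Jm_nth [simp]: "Jm X $ k = eps k * X $ k"
  by (simp add: Jm_def)

lemma Jm_Jm [simp]: "Jm (Jm X) = X"
  unfolding vec3_eq_iff by simp

lemma gm_coords: "gm X Y = X$E1 * Y$E1 + X$E2 * Y$E2 - X$E3 * Y$E3"
  by (simp add: gm_def sum_UNIV_idx)

lemma LC_nth:
  "LC br X Y $ k = eps k / 2 * (gm (br X Y) (e k) - gm (br Y (e k)) X + gm (br (e k) X) Y)"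
  unfolding LC_def by (cases k) (simp_all add: sum_UNIV_idx field_simps)

lemma algebraic_schouten_soliton_iff:
  "algebraic_schouten_soliton nab br lambda0 c \<longleftrightarrow>
     is_derivation br (\<lambda>X. ricci_op nab br X - (scal nab br * lambda0 + c) *\<^sub>R X)"
proof -
  have "(\<forall>X. ricci_op nab br X = (scal nab br * lambda0 + c) *\<^sub>R X + D X) \<longleftrightarrow>
        D = (\<lambda>X. ricci_op nab br X - (scal nab br * lambda0 + c) *\<^sub>R X)" for D
    by (auto simp: fun_eq_iff algebra_simps)
  then show ?thesis
    unfolding algebraic_schouten_soliton_def by auto
qed

lemma nabla0_eq: "nabla0 br X Y = (1/2) *\<^sub>R (LC br X Y + Jm (LC br X (Jm Y)))"
  unfolding nabla0_def covJ_def by (simp add: algebra_simps)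

definition rot12 :: "vec3 \<Rightarrow> vec3" where
  "rot12 Y = mk_vec3 (- Y$E2) (Y$E1) 0"

lemma rot12_scaleR: "rot12 (s *\<^sub>R Y) = s *\<^sub>R rot12 Y"
  by (simp add: rot12_def vec3_eq_iff)

lemma curv_rot12_connection:
  "curv (\<lambda>X Y. w X *\<^sub>R rot12 Y) br X Y Z = - w (br X Y) *\<^sub>R rot12 Z"
  unfolding curv_def by (simp add: rot12_scaleR)

lemma ricci_form_rot12_connection:
  "ricci_form (\<lambda>X Y. w X *\<^sub>R rot12 Y) br X Y = w (br X (e E2)) * Y$E1 - w (br X (e E1)) * Y$E2"
  unfolding ricci_form_def curv_rot12_connection
  by (simp add: sum_UNIV_idx gm_coords rot12_def)

lemma br7_coords: "br7 a b c d X Y = mk_vec3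
   (- a * (X$E1 * Y$E2 - X$E2 * Y$E1) + a * (X$E1 * Y$E3 - X$E3 * Y$E1) + c * (X$E2 * Y$E3 - X$E3 * Y$E2))
   (- b * (X$E1 * Y$E2 - X$E2 * Y$E1) + b * (X$E1 * Y$E3 - X$E3 * Y$E1) + d * (X$E2 * Y$E3 - X$E3 * Y$E2))
   (- b * (X$E1 * Y$E2 - X$E2 * Y$E1) + b * (X$E1 * Y$E3 - X$E3 * Y$E1) + d * (X$E2 * Y$E3 - X$E3 * Y$E2))"
  by (simp add: vec3_eq_iff br7_def algebra_simps)

definition omega7 :: "real \<Rightarrow> real \<Rightarrow> real \<Rightarrow> vec3 \<Rightarrow> real" where
  "omega7 a b c X = a * X$E1 + b * X$E2 + (c/2 - b) * X$E3"

lemma nabla0_br7: "nabla0 (br7 a b c d) = (\<lambda>X Y. omega7 a b c X *\<^sub>R rot12 Y)"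
  by (simp add: fun_eq_iff vec3_eq_iff nabla0_eq LC_nth gm_coords br7_coords omega7_def rot12_def
      algebra_simps)

lemma ricci_op_br7: "ricci_op (nabla0 (br7 a b c d)) (br7 a b c d) X = mk_vec3
   ((- b*c/2 - a^2) * X$E1 - (c*d/4 + a*c/2) * X$E3)
   ((- b*c/2 - a^2) * X$E2 + (b*c/4 + a^2/2) * X$E3)
   ((c*d/4 + a*c/2) * X$E1 - (b*c/4 + a^2/2) * X$E2)"
  unfolding vec3_eq_iff ricci_op_def sym_ricci_form_def nabla0_br7 ricci_form_rot12_connection
  by (simp add: sum_UNIV_idx br7_coords omega7_def field_simps power2_eq_square)

lemma scal_br7: "scal (nabla0 (br7 a b c d)) (br7 a b c d) = - b*c - 2*a^2"
  unfolding scal_def sym_ricci_form_def nabla0_br7 ricci_form_rot12_connection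
  by (simp add: sum_UNIV_idx br7_coords omega7_def field_simps power2_eq_square)

lemma shifted_ricci_br7_derivation_cases:
  assumes "a + d \<noteq> 0" and "a * c = 0"
    and der: "is_derivation (br7 a b c d) (\<lambda>X. ricci_op (nabla0 (br7 a b c d)) (br7 a b c d) X - m *\<^sub>R X)"
      (is "is_derivation ?br ?D")
  shows "(a = 0 \<and> c = 0 \<and> m = 0) \<or> (a \<noteq> 0 \<and> b = 0 \<and> c = 0 \<and> m = - (a^2/2))"
proof -
  define p q r where "p = - b*c/2 - a^2 - m" and "q = c*d/4 + a*c/2" and "r = b*c/4 + a^2/2"
  have D_coords: "?D X = mk_vec3 (p * X$E1 - q * X$E3) (p * X$E2 + r * X$E3) (q * X$E1 - r * X$E2 - m * X$E3)"
    for X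
    by (simp add: vec3_eq_iff ricci_op_br7 p_def q_def r_def algebra_simps)
  have leibniz: "?D (?br X Y) $ k = (?br (?D X) Y + ?br X (?D Y)) $ k" for X Y k
    using der unfolding is_derivation_def by simp
  have eq12_1: "a*p + (b + c)*q + a*r = 0"
    using leibniz[of "e E1" "e E2" E1] by (simp add: D_coords br7_coords algebra_simps)
  have eq12_2: "b*p + d*q = 0"
    using leibniz[of "e E1" "e E2" E2] by (simp add: D_coords br7_coords algebra_simps)
  have eq13_1: "b*q = a*(r + m)"
    using leibniz[of "e E1" "e E3" E1] by (simp add: D_coords br7_coords algebra_simps)
  have eq23_2: "d*r + b*q + d*m = 0"
    using leibniz[of "e E2" "e E3" E2] by (simp add: D_coords br7_coords algebra_simps)
  show ?thesis
  proof (cases "a = 0")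
    case True
    with assms have "d \<noteq> 0" by simp
    have "c*d*(b + c) = 0" "b*c*d = 0"
      using eq12_1 eq13_1 True by (simp_all add: q_def algebra_simps)
    with \<open>d \<noteq> 0\<close> have "c*(b + c) = 0" "b*c = 0"
      by simp_all
    then have "c*c = 0"
      by (simp add: algebra_simps)
    then have "c = 0"
      by simp
    with True eq23_2 \<open>d \<noteq> 0\<close> have "m = 0"
      by (simp add: q_def r_def)
    with True \<open>c = 0\<close> show ?thesis by simp
  next
    case False
    with assms have "c = 0" by simp
    with eq12_1 have "a * (2*m + a^2) = 0"
      by (simp add: p_def q_def r_def power2_eq_square algebra_simps)
    with False have "m = - (a^2/2)"
      by simp
    with eq12_2 \<open>c = 0\<close> have "b * a^2 = 0"
      by (simp add: p_def q_def algebra_simps)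
    with False have "b = 0"
      by simp
    with False \<open>c = 0\<close> \<open>m = - (a^2/2)\<close> show ?thesis by simp
  qed
qed

lemma shifted_ricci_br7_is_derivation:
  assumes "(a = 0 \<and> c = 0 \<and> m = 0) \<or> (b = 0 \<and> c = 0 \<and> m = - (a^2/2))"
  shows "is_derivation (br7 a b c d) (\<lambda>X. ricci_op (nabla0 (br7 a b c d)) (br7 a b c d) X - m *\<^sub>R X)"
    (is "is_derivation ?br ?D")
proof -
  have "?D (?br X Y) = ?br (?D X) Y + ?br X (?D Y)" for X Y
    using assms unfolding ricci_op_br7 br7_coords
    by (auto simp: vec3_eq_iff algebra_simps)
  moreover have "linear ?D"
    unfolding ricci_op_br7 by (rule linearI) (simp_all add: vec3_eq_iff field_simps)
  ultimately show ?thesis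
    unfolding is_derivation_def by blast
qed

lemma is_derivation_shifted_ricci_br7_iff:
  assumes "a + d \<noteq> 0" and "a * c = 0"
  shows "is_derivation (br7 a b c d) (\<lambda>X. ricci_op (nabla0 (br7 a b c d)) (br7 a b c d) X - m *\<^sub>R X)
         \<longleftrightarrow> (a = 0 \<and> c = 0 \<and> m = 0) \<or> (a \<noteq> 0 \<and> b = 0 \<and> c = 0 \<and> m = - (a^2/2))"
  using shifted_ricci_br7_derivation_cases[OF assms] shifted_ricci_br7_is_derivation by blast

theorem theorem4p14:
  fixes a b c d lambda0 cc :: real
  assumes "a + d \<noteq> 0" and "a * c = 0"
  shows "algebraic_schouten_soliton (nabla0 (br7 a b c d)) (br7 a b c d) lambda0 cc \<longleftrightarrow>
           ((a = 0 \<and> c = 0 \<and> d \<noteq> 0 \<and> cc = 0) \<or>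
            (a \<noteq> 0 \<and> b = 0 \<and> c = 0 \<and> a + d \<noteq> 0 \<and>
             cc = - (1/2) * a^2 + 2 * a^2 * lambda0))"
proof -
  let ?m = "scal (nabla0 (br7 a b c d)) (br7 a b c d) * lambda0 + cc"
  have "algebraic_schouten_soliton (nabla0 (br7 a b c d)) (br7 a b c d) lambda0 cc \<longleftrightarrow>
        (a = 0 \<and> c = 0 \<and> ?m = 0) \<or> (a \<noteq> 0 \<and> b = 0 \<and> c = 0 \<and> ?m = - (a^2/2))"
    unfolding algebraic_schouten_soliton_iff is_derivation_shifted_ricci_br7_iff[OF assms] ..
  then show ?thesis
    using assms by (cases "a = 0") (auto simp: scal_br7 algebra_simps)
qed

end
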